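(* Let $S_0=\{x\in\mathbb{C}:0<{\rm Im}(x)<\pi\}$. Then for all $x,y\in S_0$: (1) $j^*_{S_0}(x,y)\le p_{S_0}(x,y)\le\sqrt2\,j^*_{S_0}(x,y)$; (2) $j^*_{S_0}(x,y)\le s_{S_0}(x,y)\le\sqrt2\,j^*_{S_0}(x,y)$; (3) $p_{S_0}(x,y)/\sqrt2\le s_{S_0}(x,y)\le p_{S_0}(x,y)$. Furthermore, in each case the constants are sharp.
   Context: For a domain $G\subsetneq\mathbb{C}$, $d_G(x)=\inf\{|x-z|:z\in\partial G\}$, $s_G(x,y)=\frac{|x-y|}{\inf_{z\in\partial G}(|x-z|+|z-y|)}$, $j^*_G(x,y)=\frac{|x-y|}{|x-y|+2\min\{d_G(x),d_G(y)\}}$, $p_G(x,y)=\frac{|x-y|}{\sqrt{|x-y|^2+4d_G(x)d_G(y)}}$. *)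

theory Defs
  imports "HOL-Analysis.Analysis"
begin

definition dG :: "complex set \<Rightarrow> complex \<Rightarrow> real" where
  "dG G x = infdist x (frontier G)"

definition sG :: "complex set \<Rightarrow> complex \<Rightarrow> complex \<Rightarrow> real" where
  "sG G x y = cmod (x - y) / (INF z\<in>frontier G. cmod (x - z) + cmod (z - y))"

definition jstarG :: "complex set \<Rightarrow> complex \<Rightarrow> complex \<Rightarrow> real" where
  "jstarG G x y = cmod (x - y) / (cmod (x - y) + 2 * min (dG G x) (dG G y))"

definition pG :: "complex set \<Rightarrow> complex \<Rightarrow> complex \<Rightarrow> real" where
  "pG G x y = cmod (x - y) / sqrt ((cmod (x - y))\<^sup>2 + 4 * dG G x * dG G y)"

definition S0 :: "complex set" where
  "S0 = {x. 0 < Im x \<and> Im x < pi}"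

end

theory Submission
  imports Defs
begin

(* Write t = |x - y| and d_x, d_y for the boundary distances. In any domain d is 1-Lipschitz, so
   t^2 + 4 d_x d_y <= (t + 2 min(d_x, d_y))^2 <= 2 (t^2 + 4 d_x d_y), the second step by AM-GM;
   this is j* <= p <= sqrt 2 j*. Detouring through boundary points close to x (or to y) shows
   inf_z (|x - z| + |z - y|) <= t + 2 min(d_x, d_y), i.e. j* <= s. In the strip every boundary
   point z lies on one of the lines Im = 0, Im = pi; if y' is the mirror image of y in that line,
   then |x - z| + |z - y| >= |x - y'| = sqrt (t^2 + 4 h_x h_y), where h is the height above the
   line, and h >= d gives s <= p. Chaining these yields the remaining two bounds.
   Sharpness: x = i, y = 2 + i gives s = p = sqrt 2 j*; x = i pi/4, y = 3 i pi/4 gives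
   s = p / sqrt 2; and x = i e, y = 1 + i e gives s <= p <= (1 + 2 e) j* with e -> 0. *)

definition frontier_detour :: "complex set \<Rightarrow> complex \<Rightarrow> complex \<Rightarrow> real" where
  "frontier_detour G x y = (INF z\<in>frontier G. cmod (x - z) + cmod (z - y))"

lemma sG_eq_frontier_detour: "sG G x y = cmod (x - y) / frontier_detour G x y"
  by (simp add: sG_def frontier_detour_def)

lemma dG_nonneg: "0 \<le> dG G x"
  by (simp add: dG_def infdist_nonneg)

lemma dG_lipschitz: "\<bar>dG G x - dG G y\<bar> \<le> cmod (x - y)"
  unfolding dG_def dist_norm[symmetric] by (rule infdist_triangle_abs)

lemma frontier_detour_ge_dist:
  assumes "frontier G \<noteq> {}"
  shows "cmod (x - y) \<le> frontier_detour G x y"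
  unfolding frontier_detour_def
proof (rule cINF_greatest[OF assms])
  fix z
  show "cmod (x - y) \<le> cmod (x - z) + cmod (z - y)"
    using norm_triangle_ineq[of "x - z" "z - y"] by simp
qed

lemma frontier_detour_le_add_min_dG:
  assumes "frontier G \<noteq> {}"
  shows "frontier_detour G x y \<le> cmod (x - y) + 2 * min (dG G x) (dG G y)"
proof -
  have detour_le: "frontier_detour G x y \<le> cmod (x - y) + 2 * dist w z"
    if "z \<in> frontier G" "w = x \<or> w = y" for w z
  proof -
    have "frontier_detour G x y \<le> cmod (x - z) + cmod (z - y)"
      unfolding frontier_detour_def
      by (rule cINF_lower[OF bdd_belowI[of _ 0] \<open>z \<in> frontier G\<close>]) auto
    also have "\<dots> \<le> cmod (x - y) + 2 * dist w z"
      using that(2) norm_triangle_ineq[of "x - y" "y - z"] norm_triangle_ineq[of "z - x" "x - y"]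
      by (auto simp: dist_norm norm_minus_commute)
    finally show ?thesis .
  qed
  have "frontier_detour G x y \<le> cmod (x - y) + 2 * dG G w" if "w = x \<or> w = y" for w
  proof -
    have "(frontier_detour G x y - cmod (x - y)) / 2 \<le> infdist w (frontier G)"
      unfolding infdist_notempty[OF assms]
      by (rule cINF_greatest[OF assms]) (use detour_le that in fastforce)
    then show ?thesis by (simp add: dG_def)
  qed
  then show ?thesis by (simp add: min_def)
qed

lemma sqrt_le_add_twice_min:
  fixes t a b :: real
  assumes "0 \<le> t" "0 \<le> a" "0 \<le> b" "\<bar>a - b\<bar> \<le> t"
  shows "sqrt (t\<^sup>2 + 4 * a * b) \<le> t + 2 * min a b"
proof -
  have "a * b \<le> min a b * (min a b + t)"
  proof (cases "a \<le> b")
    case True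
    then have "a * b \<le> a * (a + t)"
      using assms by (intro mult_left_mono) auto
    then show ?thesis using True by simp
  next
    case False
    then have "a * b \<le> (b + t) * b"
      using assms by (intro mult_right_mono) auto
    then show ?thesis using False by (simp add: mult.commute)
  qed
  then have "t\<^sup>2 + 4 * a * b \<le> (t + 2 * min a b)\<^sup>2"
    by (simp add: power2_eq_square algebra_simps)
  then show ?thesis
    using assms by (intro real_le_lsqrt) auto
qed

lemma add_twice_min_le_sqrt2_sqrt:
  fixes t a b :: real
  assumes "0 \<le> a" "0 \<le> b"
  shows "t + 2 * min a b \<le> sqrt 2 * sqrt (t\<^sup>2 + 4 * a * b)"
proof -
  have "min a b * min a b \<le> a * b"
    using assms by (intro mult_mono) auto
  moreover have "4 * t * min a b \<le> t\<^sup>2 + 4 * (min a b)\<^sup>2"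
    using sum_squares_ge_zero[of "t - 2 * min a b" 0] by (simp add: power2_eq_square algebra_simps)
  ultimately have "(t + 2 * min a b)\<^sup>2 \<le> 2 * (t\<^sup>2 + 4 * a * b)"
    by (simp add: power2_eq_square algebra_simps)
  then show ?thesis
    by (metis real_sqrt_mult real_le_rsqrt zero_le_numeral mult_nonneg_nonneg)
qed

lemma jstarG_le_pG: "jstarG G x y \<le> pG G x y"
proof (cases "x = y")
  case False
  then have "0 < cmod (x - y)"
    by simp
  moreover have "sqrt ((cmod (x - y))\<^sup>2 + 4 * dG G x * dG G y)
      \<le> cmod (x - y) + 2 * min (dG G x) (dG G y)"
    by (intro sqrt_le_add_twice_min dG_nonneg dG_lipschitz norm_ge_zero)
  moreover have "0 < (cmod (x - y))\<^sup>2 + 4 * dG G x * dG G y"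
    using \<open>0 < cmod (x - y)\<close> dG_nonneg[of G x] dG_nonneg[of G y] by (simp add: add_pos_nonneg)
  ultimately show ?thesis
    unfolding jstarG_def pG_def
    by (intro divide_left_mono) (auto simp: add_pos_nonneg dG_nonneg)
qed (simp add: jstarG_def pG_def)

lemma pG_le_sqrt2_jstarG: "pG G x y \<le> sqrt 2 * jstarG G x y"
proof (cases "x = y")
  case False
  define t where "t = cmod (x - y)"
  define D where "D = t + 2 * min (dG G x) (dG G y)"
  have "0 < t"
    using False by (simp add: t_def)
  then have "0 < D"
    using dG_nonneg[of G x] dG_nonneg[of G y] by (simp add: D_def min_def)
  have "D \<le> sqrt 2 * sqrt (t\<^sup>2 + 4 * dG G x * dG G y)"
    unfolding D_def by (intro add_twice_min_le_sqrt2_sqrt dG_nonneg)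
  then have "D / sqrt 2 \<le> sqrt (t\<^sup>2 + 4 * dG G x * dG G y)"
    by (subst pos_divide_le_eq) (simp_all add: mult.commute)
  moreover have "0 < D / sqrt 2"
    using \<open>0 < D\<close> by simp
  ultimately have "t / sqrt (t\<^sup>2 + 4 * dG G x * dG G y) \<le> t / (D / sqrt 2)"
    using \<open>0 < t\<close> dG_nonneg[of G x] dG_nonneg[of G y]
    by (intro divide_left_mono mult_pos_pos) (auto simp: add_pos_nonneg)
  then show ?thesis
    unfolding pG_def jstarG_def t_def[symmetric] D_def[symmetric] by (simp add: mult.commute)
qed (simp add: jstarG_def pG_def)

lemma jstarG_le_sG:
  assumes "frontier G \<noteq> {}"
  shows "jstarG G x y \<le> sG G x y"
proof (cases "x = y")
  case False
  then have "0 < cmod (x - y)"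
    by simp
  then have "0 < frontier_detour G x y"
    using frontier_detour_ge_dist[OF assms, of x y] by linarith
  then show ?thesis
    unfolding jstarG_def sG_eq_frontier_detour
    using frontier_detour_le_add_min_dG[OF assms, of x y]
    by (intro divide_left_mono) auto
qed (simp add: jstarG_def sG_def)

lemma sum_dist_through_horizontal_line_ge:
  assumes "Im z = c"
  shows "sqrt ((cmod (x - y))\<^sup>2 + 4 * (Im x - c) * (Im y - c)) \<le> cmod (x - z) + cmod (z - y)"
proof -
  define y' where "y' = Complex (Re y) (2 * c - Im y)"
  have "(cmod (x - y))\<^sup>2 + 4 * (Im x - c) * (Im y - c) = (cmod (x - y'))\<^sup>2"
    unfolding cmod_power2 by (simp add: y'_def power2_eq_square algebra_simps)
  moreover have "cmod (z - y) = cmod (z - y')"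
    using assms by (simp add: y'_def cmod_def power2_eq_square algebra_simps)
  ultimately show ?thesis
    using norm_triangle_ineq[of "x - z" "z - y'"] by simp
qed

lemma frontier_S0: "frontier S0 = {z. Im z = 0 \<or> Im z = pi}"
proof -
  have "open S0"
    unfolding S0_def by (simp add: open_Collect_conj open_halfspace_Im_gt open_halfspace_Im_lt)
  then have frontier_eq: "frontier S0 = closure S0 - S0"
    by (simp add: frontier_def interior_open)
  have closure_sub: "closure S0 \<subseteq> {z. 0 \<le> Im z} \<inter> {z. Im z \<le> pi}"
    by (rule closure_minimal)
      (auto simp: S0_def closed_halfspace_Im_ge closed_halfspace_Im_le closed_Int)
  have closure_sup: "z \<in> closure S0" if "Im z = 0 \<or> Im z = pi" for z
  proof -
    define a where "a = Complex (Re z) 0"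
    define b where "b = Complex (Re z) pi"
    have "open_segment a b \<subseteq> S0"
    proof
      fix w assume "w \<in> open_segment a b"
      then obtain u where u: "0 < u" "u < 1" and "w = (1 - u) *\<^sub>R a + u *\<^sub>R b"
        unfolding in_segment by blast
      then have "Im w = u * pi"
        by (simp add: a_def b_def)
      then show "w \<in> S0"
        using u pi_gt_zero by (simp add: S0_def)
    qed
    then have "closure (open_segment a b) \<subseteq> closure S0"
      by (rule closure_mono)
    moreover have "a \<noteq> b"
      using pi_gt_zero by (simp add: a_def b_def)
    moreover have "z = a \<or> z = b"
      using that by (auto simp: a_def b_def complex_eq_iff)
    ultimately show ?thesis
      by auto
  qed
  show ?thesis
  proof (intro equalityI subsetI)
    fix z assume "z \<in> frontier S0"
    then have "0 \<le> Im z" "Im z \<le> pi" "z \<notin> S0"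
      using closure_sub unfolding frontier_eq by auto
    then show "z \<in> {z. Im z = 0 \<or> Im z = pi}"
      by (auto simp: S0_def)
  next
    fix z assume "z \<in> {z. Im z = 0 \<or> Im z = pi}"
    then show "z \<in> frontier S0"
      using closure_sup unfolding frontier_eq by (auto simp: S0_def)
  qed
qed

lemma frontier_S0_nonempty: "frontier S0 \<noteq> {}"
  by (auto simp: frontier_S0 intro: exI[of _ 0])

lemma dG_S0:
  assumes "x \<in> S0"
  shows "dG S0 x = min (Im x) (pi - Im x)"
proof (rule antisym)
  have "Complex (Re x) 0 \<in> frontier S0" "Complex (Re x) pi \<in> frontier S0"
    by (simp_all add: frontier_S0)
  moreover have "dist x (Complex (Re x) 0) = Im x" "dist x (Complex (Re x) pi) = pi - Im x"
    using assms by (simp_all add: dist_norm cmod_def S0_def power2_commute)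
  ultimately show "dG S0 x \<le> min (Im x) (pi - Im x)"
    unfolding dG_def by (metis infdist_le min.boundedI)
next
  show "min (Im x) (pi - Im x) \<le> dG S0 x"
    unfolding dG_def infdist_notempty[OF frontier_S0_nonempty]
  proof (rule cINF_greatest[OF frontier_S0_nonempty])
    fix z assume "z \<in> frontier S0"
    then have "Im z = 0 \<or> Im z = pi" by (simp add: frontier_S0)
    moreover have "\<bar>Im (x - z)\<bar> \<le> dist x z"
      unfolding dist_norm by (rule abs_Im_le_cmod)
    ultimately show "min (Im x) (pi - Im x) \<le> dist x z" by auto
  qed
qed

lemma frontier_detour_S0_ge:
  "sqrt ((cmod (x - y))\<^sup>2 + 4 * min (Im x * Im y) ((pi - Im x) * (pi - Im y)))
     \<le> frontier_detour S0 x y"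
  unfolding frontier_detour_def
proof (rule cINF_greatest[OF frontier_S0_nonempty])
  fix z assume "z \<in> frontier S0"
  then consider "Im z = 0" | "Im z = pi"
    by (auto simp: frontier_S0)
  then show "sqrt ((cmod (x - y))\<^sup>2 + 4 * min (Im x * Im y) ((pi - Im x) * (pi - Im y)))
      \<le> cmod (x - z) + cmod (z - y)"
  proof cases
    case 1
    have "sqrt ((cmod (x - y))\<^sup>2 + 4 * min (Im x * Im y) ((pi - Im x) * (pi - Im y)))
        \<le> sqrt ((cmod (x - y))\<^sup>2 + 4 * (Im x - 0) * (Im y - 0))"
      by (intro real_sqrt_le_mono add_left_mono) (simp add: mult.assoc)
    also have "\<dots> \<le> cmod (x - z) + cmod (z - y)"
      by (rule sum_dist_through_horizontal_line_ge[OF 1])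
    finally show ?thesis .
  next
    case 2
    have "sqrt ((cmod (x - y))\<^sup>2 + 4 * min (Im x * Im y) ((pi - Im x) * (pi - Im y)))
        \<le> sqrt ((cmod (x - y))\<^sup>2 + 4 * (Im x - pi) * (Im y - pi))"
    proof (intro real_sqrt_le_mono add_left_mono)
      have reflected: "(Im x - pi) * (Im y - pi) = (pi - Im x) * (pi - Im y)"
        by (simp add: algebra_simps)
      show "4 * min (Im x * Im y) ((pi - Im x) * (pi - Im y)) \<le> 4 * (Im x - pi) * (Im y - pi)"
        unfolding mult.assoc reflected by simp
    qed
    also have "\<dots> \<le> cmod (x - z) + cmod (z - y)"
      by (rule sum_dist_through_horizontal_line_ge[OF 2])
    finally show ?thesis .
  qed
qed

lemma sG_S0_le_pG:
  assumes "x \<in> S0" "y \<in> S0"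
  shows "sG S0 x y \<le> pG S0 x y"
proof (cases "x = y")
  case False
  define Q where "Q = sqrt ((cmod (x - y))\<^sup>2 + 4 * dG S0 x * dG S0 y)"
  have "dG S0 x * dG S0 y \<le> min (Im x * Im y) ((pi - Im x) * (pi - Im y))"
    using assms unfolding dG_S0[OF assms(1)] dG_S0[OF assms(2)]
    by (auto simp: S0_def intro: mult_mono)
  then have "Q \<le> sqrt ((cmod (x - y))\<^sup>2 + 4 * min (Im x * Im y) ((pi - Im x) * (pi - Im y)))"
    unfolding Q_def by (intro real_sqrt_le_mono add_left_mono) (simp add: mult.assoc)
  also have "\<dots> \<le> frontier_detour S0 x y"
    by (rule frontier_detour_S0_ge)
  finally have "Q \<le> frontier_detour S0 x y" .
  moreover have "0 < Q"
    unfolding Q_def using False dG_nonneg[of S0 x] dG_nonneg[of S0 y]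
    by (simp add: add_pos_nonneg)
  ultimately show ?thesis
    unfolding pG_def sG_eq_frontier_detour Q_def[symmetric] by (intro divide_left_mono) auto
qed (simp add: pG_def sG_def)

lemma S0_distance_ratio_bounds:
  assumes "x \<in> S0" "y \<in> S0"
  shows "jstarG S0 x y \<le> pG S0 x y" "pG S0 x y \<le> sqrt 2 * jstarG S0 x y"
    "jstarG S0 x y \<le> sG S0 x y" "sG S0 x y \<le> sqrt 2 * jstarG S0 x y"
    "pG S0 x y / sqrt 2 \<le> sG S0 x y" "sG S0 x y \<le> pG S0 x y"
proof -
  show p_j: "jstarG S0 x y \<le> pG S0 x y" "pG S0 x y \<le> sqrt 2 * jstarG S0 x y"
    by (rule jstarG_le_pG, rule pG_le_sqrt2_jstarG)
  show s_j: "jstarG S0 x y \<le> sG S0 x y"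
    by (rule jstarG_le_sG[OF frontier_S0_nonempty])
  show s_p: "sG S0 x y \<le> pG S0 x y"
    by (rule sG_S0_le_pG[OF assms])
  show "sG S0 x y \<le> sqrt 2 * jstarG S0 x y"
    using s_p p_j by linarith
  have "pG S0 x y / sqrt 2 \<le> jstarG S0 x y"
    using p_j by (simp add: divide_le_eq mult.commute)
  then show "pG S0 x y / sqrt 2 \<le> sG S0 x y"
    using s_j by linarith
qed

lemma S0_jstarG_le_pG_sG_sharp:
  assumes "1 < c"
  shows "\<exists>x\<in>S0. \<exists>y\<in>S0. x \<noteq> y \<and> pG S0 x y < c * jstarG S0 x y \<and> sG S0 x y < c * jstarG S0 x y"
proof -
  define e where "e = min 1 ((c - 1) / 4)"
  define x where "x = Complex 0 e"
  define y where "y = Complex 1 e"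
  have "e \<le> (c - 1) / 4"
    unfolding e_def by (rule min.cobounded2)
  then have e: "0 < e" "e \<le> 1" "1 + 2 * e < c"
    using assms by (auto simp: e_def)
  then have in_S0: "x \<in> S0" "y \<in> S0"
    using pi_gt3 by (auto simp: S0_def x_def y_def)
  have "dG S0 x = e" "dG S0 y = e" "cmod (x - y) = 1"
    using e pi_gt3 dG_S0[OF in_S0(1)] dG_S0[OF in_S0(2)] by (simp_all add: x_def y_def cmod_def)
  then have "pG S0 x y = 1 / sqrt (1 + 4 * e * e)" and jstar: "jstarG S0 x y = 1 / (1 + 2 * e)"
    by (simp_all add: jstarG_def pG_def mult.assoc)
  moreover have "1 \<le> sqrt (1 + 4 * e * e)"
    using e by simp
  ultimately have "pG S0 x y \<le> 1"
    using e by (simp, subst divide_le_eq_1_pos) (auto intro: add_pos_nonneg)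
  also have "1 < c * jstarG S0 x y"
    unfolding jstar using e by (simp add: field_simps)
  finally have "pG S0 x y < c * jstarG S0 x y" .
  moreover have "x \<noteq> y"
    by (simp add: x_def y_def)
  ultimately show ?thesis
    using in_S0 sG_S0_le_pG[OF in_S0] by fastforce
qed

lemma S0_pG_eq_sqrt2_jstarG_attained:
  "\<exists>x\<in>S0. \<exists>y\<in>S0. x \<noteq> y \<and> 0 < jstarG S0 x y \<and>
     pG S0 x y = sqrt 2 * jstarG S0 x y \<and> sG S0 x y = pG S0 x y"
proof -
  define x where "x = Complex 0 1"
  define y where "y = Complex 2 1"
  have in_S0: "x \<in> S0" "y \<in> S0"
    using pi_gt3 by (auto simp: S0_def x_def y_def)
  have d: "dG S0 x = 1" "dG S0 y = 1" and t: "cmod (x - y) = 2"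
    using pi_gt3 dG_S0[OF in_S0(1)] dG_S0[OF in_S0(2)] by (simp_all add: x_def y_def cmod_def)
  have sqrt8: "sqrt 8 = 2 * sqrt 2"
    using real_sqrt_mult[of 4 2] by simp
  have j_pos: "0 < jstarG S0 x y"
    by (simp add: jstarG_def d t)
  have p: "pG S0 x y = sqrt 2 * jstarG S0 x y"
    by (simp add: pG_def jstarG_def d t sqrt8 field_simps)
  have "frontier_detour S0 x y \<le> cmod (x - 1) + cmod (1 - y)"
    unfolding frontier_detour_def
    by (rule cINF_lower[OF bdd_belowI[of _ 0]]) (auto simp: frontier_S0)
  also have "\<dots> = sqrt 8"
    by (simp add: x_def y_def cmod_def sqrt8)
  finally have "frontier_detour S0 x y \<le> sqrt 8" .
  moreover have "sqrt 8 \<le> frontier_detour S0 x y"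
  proof -
    have "1 \<le> (pi - 1) * (pi - 1)"
      using mult_mono[of 1 "pi - 1" 1 "pi - 1"] pi_gt3 by simp
    then have "min (Im x * Im y) ((pi - Im x) * (pi - Im y)) = 1"
      by (simp add: x_def y_def)
    then show ?thesis
      using frontier_detour_S0_ge[of x y] by (simp add: t)
  qed
  ultimately have "sG S0 x y = pG S0 x y"
    by (simp add: sG_eq_frontier_detour pG_def d t)
  moreover have "x \<noteq> y"
    by (simp add: x_def y_def)
  ultimately show ?thesis
    using in_S0 j_pos p by blast
qed

lemma S0_pG_sG_le_sqrt2_jstarG_sharp:
  assumes "c < sqrt 2"
  shows "\<exists>x\<in>S0. \<exists>y\<in>S0. x \<noteq> y \<and> c * jstarG S0 x y < pG S0 x y \<and> c * jstarG S0 x y < sG S0 x y"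
proof -
  obtain x y where xy: "x \<in> S0" "y \<in> S0" "x \<noteq> y" "0 < jstarG S0 x y"
    and p: "pG S0 x y = sqrt 2 * jstarG S0 x y" and s: "sG S0 x y = pG S0 x y"
    using S0_pG_eq_sqrt2_jstarG_attained by blast
  have "c * jstarG S0 x y < pG S0 x y" "c * jstarG S0 x y < sG S0 x y"
    unfolding s p using assms \<open>0 < jstarG S0 x y\<close> by simp_all
  then show ?thesis
    using xy by blast
qed

lemma S0_sG_le_pG_sharp:
  assumes "c < 1"
  shows "\<exists>x\<in>S0. \<exists>y\<in>S0. x \<noteq> y \<and> c * pG S0 x y < sG S0 x y"
proof -
  obtain x y where xy: "x \<in> S0" "y \<in> S0" "x \<noteq> y" "0 < jstarG S0 x y"
    and p: "pG S0 x y = sqrt 2 * jstarG S0 x y" and s: "sG S0 x y = pG S0 x y"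
    using S0_pG_eq_sqrt2_jstarG_attained by blast
  have "c * pG S0 x y < sG S0 x y"
    unfolding s p using assms \<open>0 < jstarG S0 x y\<close> by simp
  then show ?thesis
    using xy by blast
qed

lemma S0_sG_eq_pG_div_sqrt2_attained:
  "\<exists>x\<in>S0. \<exists>y\<in>S0. x \<noteq> y \<and> 0 < pG S0 x y \<and> sG S0 x y = pG S0 x y / sqrt 2"
proof -
  define x where "x = Complex 0 (pi / 4)"
  define y where "y = Complex 0 (3 * pi / 4)"
  have in_S0: "x \<in> S0" "y \<in> S0"
    using pi_gt_zero by (auto simp: S0_def x_def y_def)
  have d: "dG S0 x = pi / 4" "dG S0 y = pi / 4" and t: "cmod (x - y) = pi / 2"
    using pi_gt_zero dG_S0[OF in_S0(1)] dG_S0[OF in_S0(2)] by (simp_all add: x_def y_def cmod_def)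
  have "sqrt ((pi / 2)\<^sup>2 + 4 * (pi / 4) * (pi / 4)) = pi / sqrt 2"
    using pi_gt_zero by (simp add: power_divide power2_eq_square real_sqrt_divide)
  then have "pG S0 x y = (pi / 2) / (pi / sqrt 2)"
    unfolding pG_def d t by simp
  then have p: "pG S0 x y = sqrt 2 / 2"
    using pi_gt_zero by (simp add: field_simps)
  then have "0 < pG S0 x y"
    by (simp only: p) simp
  have "(pi - Im x) * (pi - Im y) = Im x * Im y"
    by (simp add: x_def y_def field_simps)
  moreover have "(cmod (x - y))\<^sup>2 + 4 * (Im x * Im y) = pi\<^sup>2"
    unfolding t by (simp add: x_def y_def power2_eq_square field_simps)
  ultimately have "pi \<le> frontier_detour S0 x y"
    using frontier_detour_S0_ge[of x y] pi_gt_zero by simp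
  moreover have "frontier_detour S0 x y \<le> pi"
    using frontier_detour_le_add_min_dG[OF frontier_S0_nonempty, of x y] by (simp add: d t)
  ultimately have "sG S0 x y = pG S0 x y / sqrt 2"
    using pi_gt_zero by (simp add: sG_eq_frontier_detour t p)
  moreover have "x \<noteq> y"
    using pi_gt_zero by (simp add: x_def y_def)
  ultimately show ?thesis
    using in_S0 \<open>0 < pG S0 x y\<close> by blast
qed

lemma S0_pG_div_sqrt2_le_sG_sharp:
  assumes "1 / sqrt 2 < c"
  shows "\<exists>x\<in>S0. \<exists>y\<in>S0. x \<noteq> y \<and> sG S0 x y < c * pG S0 x y"
proof -
  obtain x y where xy: "x \<in> S0" "y \<in> S0" "x \<noteq> y" "0 < pG S0 x y"
    and s: "sG S0 x y = pG S0 x y / sqrt 2"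
    using S0_sG_eq_pG_div_sqrt2_attained by blast
  have "sG S0 x y < c * pG S0 x y"
    unfolding s using mult_strict_right_mono[OF assms \<open>0 < pG S0 x y\<close>] by simp
  then show ?thesis
    using xy by blast
qed

theorem theorem3p12:
  shows "(\<forall>x\<in>S0. \<forall>y\<in>S0.
            jstarG S0 x y \<le> pG S0 x y \<and> pG S0 x y \<le> sqrt 2 * jstarG S0 x y \<and>
            jstarG S0 x y \<le> sG S0 x y \<and> sG S0 x y \<le> sqrt 2 * jstarG S0 x y \<and>
            pG S0 x y / sqrt 2 \<le> sG S0 x y \<and> sG S0 x y \<le> pG S0 x y)
       \<and> (\<forall>c>1. \<exists>x\<in>S0. \<exists>y\<in>S0. x \<noteq> y \<and> pG S0 x y < c * jstarG S0 x y)
       \<and> (\<forall>c<sqrt 2. \<exists>x\<in>S0. \<exists>y\<in>S0. x \<noteq> y \<and> pG S0 x y > c * jstarG S0 x y)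
       \<and> (\<forall>c>1. \<exists>x\<in>S0. \<exists>y\<in>S0. x \<noteq> y \<and> sG S0 x y < c * jstarG S0 x y)
       \<and> (\<forall>c<sqrt 2. \<exists>x\<in>S0. \<exists>y\<in>S0. x \<noteq> y \<and> sG S0 x y > c * jstarG S0 x y)
       \<and> (\<forall>c>1 / sqrt 2. \<exists>x\<in>S0. \<exists>y\<in>S0. x \<noteq> y \<and> sG S0 x y < c * pG S0 x y)
       \<and> (\<forall>c<1. \<exists>x\<in>S0. \<exists>y\<in>S0. x \<noteq> y \<and> sG S0 x y > c * pG S0 x y)"
proof (intro conjI allI impI ballI)
  fix x y assume "x \<in> S0" "y \<in> S0"
  then show "jstarG S0 x y \<le> pG S0 x y" "pG S0 x y \<le> sqrt 2 * jstarG S0 x y"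
    "jstarG S0 x y \<le> sG S0 x y" "sG S0 x y \<le> sqrt 2 * jstarG S0 x y"
    "pG S0 x y / sqrt 2 \<le> sG S0 x y" "sG S0 x y \<le> pG S0 x y"
    by (rule S0_distance_ratio_bounds)+
next
  fix c :: real assume "1 < c"
  then show "\<exists>x\<in>S0. \<exists>y\<in>S0. x \<noteq> y \<and> pG S0 x y < c * jstarG S0 x y"
    and "\<exists>x\<in>S0. \<exists>y\<in>S0. x \<noteq> y \<and> sG S0 x y < c * jstarG S0 x y"
    using S0_jstarG_le_pG_sG_sharp by blast+
next
  fix c :: real assume "c < sqrt 2"
  then show "\<exists>x\<in>S0. \<exists>y\<in>S0. x \<noteq> y \<and> pG S0 x y > c * jstarG S0 x y"
    and "\<exists>x\<in>S0. \<exists>y\<in>S0. x \<noteq> y \<and> sG S0 x y > c * jstarG S0 x y"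
    using S0_pG_sG_le_sqrt2_jstarG_sharp by blast+
next
  fix c :: real assume "1 / sqrt 2 < c"
  then show "\<exists>x\<in>S0. \<exists>y\<in>S0. x \<noteq> y \<and> sG S0 x y < c * pG S0 x y"
    by (rule S0_pG_div_sqrt2_le_sG_sharp)
next
  fix c :: real assume "c < 1"
  then show "\<exists>x\<in>S0. \<exists>y\<in>S0. x \<noteq> y \<and> sG S0 x y > c * pG S0 x y"
    by (rule S0_sG_le_pG_sharp)
qed

end
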